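(* There exists an absolute constant $C>0$ such that the following holds. Let $d,N,L\in\mathbb{N}$, let $W^{(0)}\in\mathbb{R}^{N\times d}$, $W^{(\ell)}\in\mathbb{R}^{N\times N}$ ($1\le\ell\le L-1$) and $b^{(0)},\dots,b^{(L-1)}\in\mathbb{R}^N$ be fixed, and set $\Lambda=\|W^{(L-1)}\|_2\cdots\|W^{(0)}\|_2$. For $x\in\mathbb{R}^d$ and $z\in\overline{B}_d(0,1)$ let $Y_{z,x}=D^{(L-1)}(x)W^{(L-1)}\cdots D^{(0)}(x)W^{(0)}z\in\mathbb{R}^N$ and $\mathcal{L}=\{Y_{z,x}:x\in\mathbb{R}^d,z\in\overline{B}_d(0,1)\}$. Let $W^{(L)}\in\mathbb{R}^{1\times N}$ have i.i.d. $\mathcal{N}(0,1)$ entries. Then for every $u\ge0$, with probability at least $1-2\exp(-u^2)$, $$\sup_{x\in\mathbb{R}^d}\|W^{(L)}D^{(L-1)}(x)W^{(L-1)}\cdots D^{(0)}(x)W^{(0)}\|_2\le C\Big(\int_0^\Lambda\sqrt{\ln\mathcal{N}(\mathcal{L},\|\cdot\|_2,\varepsilon)}\,d\varepsilon+u\Lambda\Big),$$ and moreover $$\mathbb{E}_{W^{(L)}}\Big[\sup_{x\in\mathbb{R}^d}\|W^{(L)}D^{(L-1)}(x)W^{(L-1)}\cdots D^{(0)}(x)W^{(0)}\|_2\Big]\le C\int_0^\Lambda\sqrt{\ln\mathcal{N}(\mathcal{L},\|\cdot\|_2,\varepsilon)}\,d\varepsilon.$$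
   Context: For $v\in\mathbb{R}^N$, $\Delta(v)$ is the $N\times N$ diagonal matrix with diagonal entries $\mathbb{1}_{v_i>0}$. For $x\in\mathbb{R}^d$ set $x^{(0)}=x$ and recursively $D^{(\ell)}(x)=\Delta(W^{(\ell)}x^{(\ell)}+b^{(\ell)})$, $x^{(\ell+1)}=\mathrm{ReLU}(W^{(\ell)}x^{(\ell)}+b^{(\ell)})$ for $0\le\ell<L$, with $\mathrm{ReLU}(t)=\max\{0,t\}$ componentwise. Matrix norms $\|\cdot\|_2$ are operator norms (Euclidean). $\overline{B}_d(0,1)$ is the closed Euclidean unit ball. $\mathcal{N}(T,\|\cdot\|_2,\varepsilon)$ is the smallest number of closed $\varepsilon$-balls centered at points of $T$ needed to cover $T$. *)

theory Defs
  imports "HOL-Analysis.Analysis" "HOL-Probability.Probability"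
begin

text \<open>Vectors of R^n are functions nat => real vanishing at indices >= n;
  matrices are functions nat => nat => real, only entries with in-range indices matter.\<close>

definition Rn :: "nat \<Rightarrow> (nat \<Rightarrow> real) set" where
  "Rn n = {x. \<forall>i\<ge>n. x i = 0}"

definition vnorm :: "nat \<Rightarrow> (nat \<Rightarrow> real) \<Rightarrow> real" where
  "vnorm n x = sqrt (\<Sum>i<n. (x i)\<^sup>2)"

definition unit_cball :: "nat \<Rightarrow> (nat \<Rightarrow> real) set" where
  "unit_cball n = {z \<in> Rn n. vnorm n z \<le> 1}"

definition mv :: "nat \<Rightarrow> nat \<Rightarrow> (nat \<Rightarrow> nat \<Rightarrow> real) \<Rightarrow> (nat \<Rightarrow> real) \<Rightarrow> (nat \<Rightarrow> real)" where
  "mv m n A x = (\<lambda>i. if i < m then (\<Sum>j<n. A i j * x j) else 0)"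

definition mm :: "nat \<Rightarrow> nat \<Rightarrow> nat \<Rightarrow> (nat \<Rightarrow> nat \<Rightarrow> real) \<Rightarrow> (nat \<Rightarrow> nat \<Rightarrow> real) \<Rightarrow> (nat \<Rightarrow> nat \<Rightarrow> real)" where
  "mm m k n A B = (\<lambda>i j. if i < m \<and> j < n then (\<Sum>l<k. A i l * B l j) else 0)"

definition opnorm :: "nat \<Rightarrow> nat \<Rightarrow> (nat \<Rightarrow> nat \<Rightarrow> real) \<Rightarrow> real" where
  "opnorm m n A = Sup ((\<lambda>z. vnorm m (mv m n A z)) ` unit_cball n)"

definition Delta :: "nat \<Rightarrow> (nat \<Rightarrow> real) \<Rightarrow> (nat \<Rightarrow> nat \<Rightarrow> real)" where
  "Delta N v = (\<lambda>i j. if i < N \<and> i = j \<and> v i > 0 then 1 else 0)"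

definition indim :: "nat \<Rightarrow> nat \<Rightarrow> nat \<Rightarrow> nat" where
  "indim d N l = (if l = 0 then d else N)"

fun act :: "nat \<Rightarrow> nat \<Rightarrow> (nat \<Rightarrow> nat \<Rightarrow> nat \<Rightarrow> real) \<Rightarrow> (nat \<Rightarrow> nat \<Rightarrow> real)
    \<Rightarrow> (nat \<Rightarrow> real) \<Rightarrow> nat \<Rightarrow> (nat \<Rightarrow> real)" where
  "act d N W b x 0 = x"
| "act d N W b x (Suc l) =
     (\<lambda>i. if i < N then max 0 (mv N (indim d N l) (W l) (act d N W b x l) i + b l i) else 0)"

definition preact :: "nat \<Rightarrow> nat \<Rightarrow> (nat \<Rightarrow> nat \<Rightarrow> nat \<Rightarrow> real) \<Rightarrow> (nat \<Rightarrow> nat \<Rightarrow> real)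
    \<Rightarrow> (nat \<Rightarrow> real) \<Rightarrow> nat \<Rightarrow> (nat \<Rightarrow> real)" where
  "preact d N W b x l = (\<lambda>i. if i < N then mv N (indim d N l) (W l) (act d N W b x l) i + b l i else 0)"

definition Dmat :: "nat \<Rightarrow> nat \<Rightarrow> (nat \<Rightarrow> nat \<Rightarrow> nat \<Rightarrow> real) \<Rightarrow> (nat \<Rightarrow> nat \<Rightarrow> real)
    \<Rightarrow> (nat \<Rightarrow> real) \<Rightarrow> nat \<Rightarrow> (nat \<Rightarrow> nat \<Rightarrow> real)" where
  "Dmat d N W b x l = Delta N (preact d N W b x l)"

text \<open>netmat ... x k = D^(k-1)(x) W^(k-1) ... D^(0)(x) W^(0), an N x d matrix (k >= 1;
  the value for k = 0 is never used)\<close>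
fun netmat :: "nat \<Rightarrow> nat \<Rightarrow> (nat \<Rightarrow> nat \<Rightarrow> nat \<Rightarrow> real) \<Rightarrow> (nat \<Rightarrow> nat \<Rightarrow> real)
    \<Rightarrow> (nat \<Rightarrow> real) \<Rightarrow> nat \<Rightarrow> (nat \<Rightarrow> nat \<Rightarrow> real)" where
  "netmat d N W b x 0 = (\<lambda>i j. 0)"
| "netmat d N W b x (Suc 0) = mm N N d (Dmat d N W b x 0) (W 0)"
| "netmat d N W b x (Suc (Suc l)) =
     mm N N d (Dmat d N W b x (Suc l)) (mm N N d (W (Suc l)) (netmat d N W b x (Suc l)))"

definition covnum :: "nat \<Rightarrow> (nat \<Rightarrow> real) set \<Rightarrow> real \<Rightarrow> nat" where
  "covnum n T eps = (LEAST k. \<exists>F. finite F \<and> F \<subseteq> T \<and> card F = k \<and>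
      T \<subseteq> (\<Union>c\<in>F. {y. vnorm n (\<lambda>i. y i - c i) \<le> eps}))"

definition gauss_vec :: "nat \<Rightarrow> (nat \<Rightarrow> real) measure" where
  "gauss_vec N = PiM {..<N} (\<lambda>_. density lborel std_normal_density)"

end

theory Submission
  imports Defs
begin

text \<open>For a fixed output row \<open>w\<close>, the operator norm of \<open>w D\<^sup>(\<^sup>L\<^sup>-\<^sup>1\<^sup>)(x) W\<^sup>(\<^sup>L\<^sup>-\<^sup>1\<^sup>) \<cdots> D\<^sup>(\<^sup>0\<^sup>)(x) W\<^sup>(\<^sup>0\<^sup>)\<close> is
  the supremum of \<open>\<bar>\<langle>Y\<^sub>z\<^sub>,\<^sub>x, w\<rangle>\<bar>\<close> over the unit ball, so the random variable of the theorem is the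
  supremum of the Gaussian process \<open>t \<mapsto> \<langle>t, w\<rangle>\<close> over the symmetric set \<open>\<L>\<close>, which lies in
  the ball of radius \<open>\<Lambda>\<close> because the activation patterns are contractions. The theorem is
  therefore Dudley's entropy bound, proved by chaining: approximate \<open>t\<close> by nearest points
  \<open>\<pi>\<^sub>k t\<close> of minimal \<open>r 2\<^sup>-\<^sup>k\<close>-nets of \<open>\<L>\<close>, bound every link \<open>\<langle>\<pi>\<^sub>k\<^sub>+\<^sub>1 t - \<pi>\<^sub>k t, w\<rangle>\<close> by a
  Gaussian tail estimate and a union bound over the at most \<open>N(\<L>, r 2\<^sup>-\<^sup>k\<^sup>-\<^sup>1)\<^sup>2\<close> links of
  level \<open>k\<close>, and sum the thresholds into the entropy integral. Summing the tail bound over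
  \<open>u = 0, 1, 2, \<dots>\<close> bounds the expectation.\<close>

section \<open>Norms, inner products and matrices on truncated vectors\<close>

definition vinner :: "nat \<Rightarrow> (nat \<Rightarrow> real) \<Rightarrow> (nat \<Rightarrow> real) \<Rightarrow> real" where
  "vinner n v w = (\<Sum>i<n. v i * w i)"

lemma vnorm_eq_L2_set: "vnorm n x = L2_set x {..<n}"
  unfolding vnorm_def L2_set_def by simp

lemma vnorm_nonneg: "vnorm n x \<ge> 0"
  unfolding vnorm_eq_L2_set by (rule L2_set_nonneg)

lemma vnorm_triangle_diff:
  "vnorm n (\<lambda>i. x i - z i) \<le> vnorm n (\<lambda>i. x i - y i) + vnorm n (\<lambda>i. y i - z i)"
  using L2_set_triangle_ineq[of "\<lambda>i. x i - y i" "\<lambda>i. y i - z i" "{..<n}"]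
  by (simp add: vnorm_eq_L2_set)

lemma vnorm_diff_commute: "vnorm n (\<lambda>i. x i - y i) = vnorm n (\<lambda>i. y i - x i)"
  unfolding vnorm_def by (simp add: power2_commute)

lemma vnorm_scale: "vnorm n (\<lambda>i. c * x i) = \<bar>c\<bar> * vnorm n x"
  unfolding vnorm_def by (simp add: power_mult_distrib sum_distrib_left[symmetric] real_sqrt_mult)

lemma vnorm_minus: "vnorm n (\<lambda>i. - x i) = vnorm n x"
  using vnorm_scale[of n "-1" x] by simp

lemma vnorm_le_iff_sum_squares_le:
  assumes "\<sigma> \<ge> 0"
  shows "vnorm n x \<le> \<sigma> \<longleftrightarrow> (\<Sum>i<n. (x i)\<^sup>2) \<le> \<sigma>\<^sup>2"
  unfolding vnorm_def using assms by (meson real_le_lsqrt sqrt_le_D)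

lemma abs_le_vnorm: "i < n \<Longrightarrow> \<bar>x i\<bar> \<le> vnorm n x"
  unfolding vnorm_def by (metis real_le_rsqrt power2_abs lessThan_iff finite_lessThan member_le_sum zero_le_power2)

lemma vinner_diff: "vinner n (\<lambda>i. a i - b i) w = vinner n a w - vinner n b w"
  unfolding vinner_def by (simp add: algebra_simps sum_subtractf)

lemma vinner_minus: "vinner n (\<lambda>i. - a i) w = - vinner n a w"
  unfolding vinner_def by (simp add: sum_negf)

lemma abs_vinner_le: "\<bar>vinner n v w\<bar> \<le> vnorm n v * vnorm n w"
proof -
  have "\<bar>vinner n v w\<bar> \<le> (\<Sum>i<n. \<bar>v i\<bar> * \<bar>w i\<bar>)"
    unfolding vinner_def by (rule order.trans[OF sum_abs]) (simp add: abs_mult)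
  also have "\<dots> \<le> vnorm n v * vnorm n w"
    unfolding vnorm_eq_L2_set by (rule L2_set_mult_ineq)
  finally show ?thesis .
qed

lemma mv_mm: "mv m k A (mv k n B z) = mv m n (mm m k n A B) z"
  unfolding mv_def mm_def
  by (rule ext) (simp add: sum_distrib_left sum_distrib_right mult_ac sum.swap[of _ "{..<k}" "{..<n}"])

lemma mv_scale: "mv m n A (\<lambda>j. c * z j) = (\<lambda>i. c * mv m n A z i)"
  unfolding mv_def by (auto simp: sum_distrib_left mult_ac)

lemma mv_minus: "mv m n A (\<lambda>j. - z j) = (\<lambda>i. - mv m n A z i)"
  using mv_scale[of m n A "-1" z] by simp

lemma mv_zero: "mv m n A (\<lambda>j. 0) = (\<lambda>i. 0)"
  unfolding mv_def by auto

lemma zero_in_unit_cball: "(\<lambda>i. 0) \<in> unit_cball n"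
  unfolding unit_cball_def Rn_def vnorm_def by simp

lemma vnorm_mv_le_frobenius:
  "vnorm m (mv m n A z) \<le> sqrt (\<Sum>i<m. \<Sum>j<n. (A i j)\<^sup>2) * vnorm n z"
proof -
  have "(\<Sum>i<m. (mv m n A z i)\<^sup>2) \<le> (\<Sum>i<m. (\<Sum>j<n. (A i j)\<^sup>2) * (\<Sum>j<n. (z j)\<^sup>2))"
  proof (rule sum_mono)
    fix i assume "i \<in> {..<m}"
    then have "\<bar>mv m n A z i\<bar> \<le> vnorm n (A i) * vnorm n z"
      using abs_vinner_le[of n "A i" z] by (simp add: mv_def vinner_def)
    then have "(mv m n A z i)\<^sup>2 \<le> (vnorm n (A i) * vnorm n z)\<^sup>2"
      by (metis abs_le_square_iff abs_of_nonneg mult_nonneg_nonneg vnorm_nonneg)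
    then show "(mv m n A z i)\<^sup>2 \<le> (\<Sum>j<n. (A i j)\<^sup>2) * (\<Sum>j<n. (z j)\<^sup>2)"
      by (simp add: vnorm_def power_mult_distrib sum_nonneg)
  qed
  then show ?thesis
    unfolding vnorm_def by (metis real_sqrt_le_mono real_sqrt_mult sum_distrib_right)
qed

lemma bdd_above_opnorm:
  "bdd_above ((\<lambda>z. vnorm m (mv m n A z)) ` unit_cball n)"
proof (rule bdd_aboveI2)
  fix z assume "z \<in> unit_cball n"
  then have "sqrt (\<Sum>i<m. \<Sum>j<n. (A i j)\<^sup>2) * vnorm n z \<le> sqrt (\<Sum>i<m. \<Sum>j<n. (A i j)\<^sup>2)"
    by (intro mult_left_le) (auto simp: unit_cball_def sum_nonneg)
  then show "vnorm m (mv m n A z) \<le> sqrt (\<Sum>i<m. \<Sum>j<n. (A i j)\<^sup>2)"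
    using vnorm_mv_le_frobenius order_trans by blast
qed

lemma vnorm_mv_le_opnorm_unit:
  "z \<in> unit_cball n \<Longrightarrow> vnorm m (mv m n A z) \<le> opnorm m n A"
  unfolding opnorm_def by (intro cSup_upper bdd_above_opnorm) auto

lemma opnorm_nonneg: "opnorm m n A \<ge> 0"
  by (metis vnorm_mv_le_opnorm_unit zero_in_unit_cball vnorm_nonneg order_trans)

lemma vnorm_mv_le_opnorm: "vnorm m (mv m n A z) \<le> opnorm m n A * vnorm n z"
proof -
  \<comment> \<open>\<open>unit_cball n\<close> only contains vectors supported on \<open>{..<n}\<close>\<close>
  define z' where "z' = (\<lambda>j. if j < n then z j else 0)"
  have mv_z': "mv m n A z' = mv m n A z" and vnorm_z': "vnorm n z' = vnorm n z"
    by (auto simp: z'_def mv_def vnorm_def)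
  show ?thesis
  proof (cases "vnorm n z = 0")
    case True
    then have "z' = (\<lambda>j. 0)"
      by (auto simp: z'_def vnorm_def sum_nonneg_eq_0_iff)
    then have "mv m n A z = (\<lambda>i. 0)" using mv_z' by (simp add: mv_zero)
    then show ?thesis using True by (simp add: vnorm_def)
  next
    case False
    define \<rho> where "\<rho> = vnorm n z"
    have \<rho>: "\<rho> > 0" using False vnorm_nonneg[of n z] by (simp add: \<rho>_def)
    have "vnorm n (\<lambda>j. (1/\<rho>) * z' j) = 1"
      using \<rho> by (simp only: vnorm_scale vnorm_z') (simp add: \<rho>_def)
    then have "(\<lambda>j. (1/\<rho>) * z' j) \<in> unit_cball n"
      by (simp add: unit_cball_def Rn_def z'_def)
    from vnorm_mv_le_opnorm_unit[OF this, of m A]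
    have "(1/\<rho>) * vnorm m (mv m n A z) \<le> opnorm m n A"
      using \<rho> by (simp only: mv_scale mv_z' vnorm_scale) simp
    then show ?thesis using \<rho> by (simp add: \<rho>_def field_simps)
  qed
qed

lemma vnorm_Delta_le: "vnorm N (mv N N (Delta N v) y) \<le> vnorm N y"
proof -
  have "mv N N (Delta N v) y i = (if v i > 0 then y i else 0)" if "i < N" for i
    using that by (simp add: mv_def Delta_def if_distrib[of "\<lambda>c. c * _"] sum.delta cong: if_cong)
  then have "(\<Sum>i<N. (mv N N (Delta N v) y i)\<^sup>2) \<le> (\<Sum>i<N. (y i)\<^sup>2)"
    by (intro sum_mono) auto
  then show ?thesis unfolding vnorm_def by simp
qed

lemma vnorm_netmat_le:
  assumes "1 \<le> L"
  shows "vnorm N (mv N d (netmat d N W b x L) z) \<le> (\<Prod>l<L. opnorm N (indim d N l) (W l)) * vnorm d z"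
  using assms
proof (induction L rule: nat_induct_at_least)
  case base
  have "vnorm N (mv N d (netmat d N W b x 1) z) \<le> vnorm N (mv N d (W 0) z)"
    using vnorm_Delta_le by (simp add: mv_mm[symmetric] Dmat_def)
  also have "\<dots> \<le> opnorm N d (W 0) * vnorm d z" by (rule vnorm_mv_le_opnorm)
  finally show ?case by (simp add: indim_def)
next
  case (Suc n)
  then obtain l where l: "n = Suc l" by (cases n) auto
  let ?y = "mv N d (netmat d N W b x n) z"
  have "vnorm N (mv N d (netmat d N W b x (Suc n)) z) \<le> vnorm N (mv N N (W n) ?y)"
    using vnorm_Delta_le l by (simp add: mv_mm[symmetric] Dmat_def)
  also have "\<dots> \<le> opnorm N N (W n) * vnorm N ?y" by (rule vnorm_mv_le_opnorm)
  also have "\<dots> \<le> opnorm N N (W n) * ((\<Prod>l<n. opnorm N (indim d N l) (W l)) * vnorm d z)"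
    using Suc.IH by (intro mult_left_mono opnorm_nonneg)
  also have "\<dots> = (\<Prod>l<Suc n. opnorm N (indim d N l) (W l)) * vnorm d z"
    using l by (simp add: indim_def mult_ac)
  finally show ?case .
qed

section \<open>Gaussian linear forms\<close>

lemma std_normal_mgf:
  "(\<integral>\<^sup>+x. ennreal (exp (a * x)) \<partial>std_normal_distribution) = ennreal (exp (a\<^sup>2 / 2))"
proof -
  have "(\<integral>\<^sup>+x. ennreal (exp (a * x)) \<partial>std_normal_distribution)
      = (\<integral>\<^sup>+x. ennreal (exp (a\<^sup>2 / 2)) * ennreal (normal_density a 1 x) \<partial>lborel)"
  proof -
    have "std_normal_density x * exp (a * x) = exp (a\<^sup>2 / 2) * normal_density a 1 x" for x
      unfolding normal_density_def
      by (simp add: exp_add[symmetric] power2_eq_square algebra_simps diff_divide_distrib add_divide_distrib)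
    then show ?thesis
      by (subst nn_integral_density) (auto simp: ennreal_mult'[symmetric] ennreal_mult[symmetric])
  qed
  also have "\<dots> = ennreal (exp (a\<^sup>2 / 2)) * emeasure (density lborel (normal_density a 1)) UNIV"
    by (simp add: nn_integral_cmult emeasure_density)
  also have "emeasure (density lborel (normal_density a 1)) UNIV = 1"
    using prob_space.emeasure_space_1[OF prob_space_normal_density[of 1 a]] by simp
  finally show ?thesis by simp
qed

lemma prob_space_gauss_vec: "prob_space (gauss_vec N)"
  unfolding gauss_vec_def by (intro prob_space_PiM) (simp add: prob_space_normal_density)

lemma borel_measurable_vinner_gauss_vec [measurable]: "vinner N v \<in> borel_measurable (gauss_vec N)"
  unfolding vinner_def gauss_vec_def by measurable

lemma gauss_vec_mgf_vinner:
  "(\<integral>\<^sup>+w. ennreal (exp (a * vinner N v w)) \<partial>gauss_vec N) = ennreal (exp (a\<^sup>2 * (vnorm N v)\<^sup>2 / 2))"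
proof -
  interpret product_prob_space "\<lambda>_::nat. std_normal_distribution"
    by (intro product_prob_spaceI prob_space_normal_density) simp
  have "exp (a * vinner N v w) = (\<Prod>i<N. exp (a * v i * w i))" for w
    unfolding vinner_def by (simp add: exp_sum sum_distrib_left mult_ac)
  then have "(\<integral>\<^sup>+w. ennreal (exp (a * vinner N v w)) \<partial>gauss_vec N)
      = (\<integral>\<^sup>+w. (\<Prod>i<N. ennreal (exp (a * v i * w i))) \<partial>gauss_vec N)"
    by (simp add: prod_ennreal)
  also have "\<dots> = (\<Prod>i<N. \<integral>\<^sup>+x. ennreal (exp (a * v i * x)) \<partial>std_normal_distribution)"
    unfolding gauss_vec_def by (rule product_nn_integral_prod) auto
  also have "\<dots> = ennreal (\<Prod>i<N. exp ((a * v i)\<^sup>2 / 2))"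
    by (simp add: std_normal_mgf prod_ennreal)
  also have "(\<Prod>i<N. exp ((a * v i)\<^sup>2 / 2)) = exp (a\<^sup>2 * (vnorm N v)\<^sup>2 / 2)"
    by (simp add: vnorm_def sum_nonneg exp_sum[symmetric] sum_divide_distrib sum_distrib_left power_mult_distrib)
  finally show ?thesis .
qed

text \<open>Chernoff bound, with the exponential moment taken at \<open>s / \<sigma>\<close>.\<close>
lemma gauss_vec_vinner_tail:
  assumes "\<sigma> > 0" and "vnorm N v \<le> \<sigma>" and "s \<ge> 0"
  shows "emeasure (gauss_vec N) {w \<in> space (gauss_vec N). \<sigma> * s < vinner N v w} \<le> ennreal (exp (- s\<^sup>2 / 2))"
proof -
  define a where "a = s / \<sigma>"
  have a: "a \<ge> 0" "a * \<sigma> = s" using assms by (auto simp: a_def)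
  let ?A = "{w \<in> space (gauss_vec N). \<sigma> * s < vinner N v w}"
  have "emeasure (gauss_vec N) ?A = (\<integral>\<^sup>+w. indicator ?A w \<partial>gauss_vec N)"
    by (rule nn_integral_indicator[symmetric]) measurable
  also have "\<dots> \<le> (\<integral>\<^sup>+w. ennreal (exp (- a * \<sigma> * s)) * ennreal (exp (a * vinner N v w)) \<partial>gauss_vec N)"
  proof (rule nn_integral_mono)
    fix w
    show "indicator ?A w \<le> ennreal (exp (- a * \<sigma> * s)) * ennreal (exp (a * vinner N v w))"
    proof (cases "w \<in> ?A")
      case True
      then have "a * (\<sigma> * s) \<le> a * vinner N v w" using a by (intro mult_left_mono) auto
      then have "1 \<le> exp (- a * \<sigma> * s) * exp (a * vinner N v w)"
        by (simp add: exp_add[symmetric])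
      then show ?thesis using True by (simp add: ennreal_mult[symmetric])
    qed simp
  qed
  also have "\<dots> = ennreal (exp (- a * \<sigma> * s)) * ennreal (exp (a\<^sup>2 * (vnorm N v)\<^sup>2 / 2))"
    by (simp add: nn_integral_cmult gauss_vec_mgf_vinner)
  also have "\<dots> = ennreal (exp (- a * \<sigma> * s + a\<^sup>2 * (vnorm N v)\<^sup>2 / 2))"
    by (simp add: ennreal_mult[symmetric] mult_exp_exp)
  also have "\<dots> \<le> ennreal (exp (- s\<^sup>2 / 2))"
  proof -
    have "(a * vnorm N v)\<^sup>2 \<le> (a * \<sigma>)\<^sup>2"
      using assms a vnorm_nonneg by (intro power_mono mult_left_mono) auto
    then have "a\<^sup>2 * (vnorm N v)\<^sup>2 \<le> s\<^sup>2" using a by (simp add: power_mult_distrib)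
    moreover have "a * \<sigma> * s = s\<^sup>2" using a by (simp add: power2_eq_square)
    ultimately have "- a * \<sigma> * s + a\<^sup>2 * (vnorm N v)\<^sup>2 / 2 \<le> - s\<^sup>2 / 2" by simp
    then show ?thesis by (intro ennreal_leI) simp
  qed
  finally show ?thesis .
qed

text \<open>Union bound over at most \<open>n\<^sup>2\<close> linear forms: the \<open>2 ln n\<close> in the threshold pays for the union.\<close>
lemma gauss_vec_max_tail:
  assumes "finite V" and "real (card V) \<le> n\<^sup>2" and "n \<ge> 1"
    and "\<sigma> > 0" and "\<And>v. v \<in> V \<Longrightarrow> vnorm N v \<le> \<sigma>" and "a \<ge> 0"
  shows "emeasure (gauss_vec N)
      (\<Union>v\<in>V. {w \<in> space (gauss_vec N). \<sigma> * sqrt (2 * (2 * ln n + a)) < vinner N v w})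
    \<le> ennreal (exp (- a))"
proof -
  define s where "s = sqrt (2 * (2 * ln n + a))"
  have s: "s \<ge> 0" "s\<^sup>2 = 2 * (2 * ln n + a)" using assms by (auto simp: s_def)
  have "exp (- s\<^sup>2 / 2) = exp (- a) / exp (ln n) ^ 2"
    by (simp add: s exp_diff[symmetric] exp_of_nat_mult[symmetric] field_simps)
  then have exp_s: "exp (- s\<^sup>2 / 2) = exp (- a) / n\<^sup>2"
    using assms by simp
  have "emeasure (gauss_vec N) (\<Union>v\<in>V. {w \<in> space (gauss_vec N). \<sigma> * s < vinner N v w})
      \<le> (\<Sum>v\<in>V. emeasure (gauss_vec N) {w \<in> space (gauss_vec N). \<sigma> * s < vinner N v w})"
    by (intro emeasure_subadditive_finite assms) auto
  also have "\<dots> \<le> (\<Sum>v\<in>V. ennreal (exp (- a) / n\<^sup>2))"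
    using gauss_vec_vinner_tail[OF assms(4) assms(5) s(1)] exp_s by (intro sum_mono) auto
  also have "\<dots> = ennreal (real (card V) * (exp (- a) / n\<^sup>2))"
    by (simp add: ennreal_of_nat_eq_real_of_nat ennreal_mult[symmetric])
  also have "\<dots> \<le> ennreal (n\<^sup>2 * (exp (- a) / n\<^sup>2))"
    using assms by (intro ennreal_leI mult_right_mono) auto
  also have "\<dots> = ennreal (exp (- a))" using assms by simp
  finally show ?thesis unfolding s_def .
qed

section \<open>Covering numbers and the entropy integral\<close>

abbreviation covers :: "nat \<Rightarrow> (nat \<Rightarrow> real) set \<Rightarrow> (nat \<Rightarrow> real) set \<Rightarrow> real \<Rightarrow> bool" where
  "covers N T F \<epsilon> \<equiv> T \<subseteq> (\<Union>c\<in>F. {y. vnorm N (\<lambda>i. y i - c i) \<le> \<epsilon>})"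

lemma abs_diff_less_if_floor_divide_eq:
  fixes a b h :: real
  assumes "h > 0" and "\<lfloor>a / h\<rfloor> = \<lfloor>b / h\<rfloor>"
  shows "\<bar>a - b\<bar> < h"
proof -
  have "\<bar>a / h - b / h\<bar> < 1" using assms(2) by linarith
  then show ?thesis using assms(1) by (simp add: diff_divide_distrib[symmetric] abs_divide)
qed

lemma floor_divide_mem_ceiling_range:
  fixes x h R :: real
  assumes "h > 0" and "\<bar>x\<bar> \<le> R"
  shows "\<lfloor>x / h\<rfloor> \<in> {-\<lceil>R / h\<rceil>..\<lceil>R / h\<rceil>}"
proof -
  have "- (R / h) \<le> x / h" "x / h \<le> R / h"
    using assms by (auto simp: divide_right_mono[of "-R" x h, simplified] divide_right_mono)
  then have "\<lfloor>- (R / h)\<rfloor> \<le> \<lfloor>x / h\<rfloor>" "\<lfloor>x / h\<rfloor> \<le> \<lfloor>R / h\<rfloor>"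
    by (auto intro: floor_mono)
  then show ?thesis using floor_le_ceiling[of "R / h"] by (simp add: ceiling_def)
qed

lemma real_card_ceiling_cube_le:
  fixes h R :: real
  assumes "h > 0" and "R \<ge> 0"
  shows "real (card (PiE {..<N} (\<lambda>_::nat. {-\<lceil>R / h\<rceil>..\<lceil>R / h\<rceil>}))) \<le> (2 * R / h + 3) ^ N"
proof -
  have "0 \<le> R / h" using assms by simp
  then have "real (nat (2 * \<lceil>R / h\<rceil> + 1)) \<le> 2 * R / h + 3" by linarith
  then have "real (nat (2 * \<lceil>R / h\<rceil> + 1)) ^ N \<le> (2 * R / h + 3) ^ N"
    by (intro power_mono) auto
  then show ?thesis by (simp add: card_PiE)
qed

text \<open>One point of \<open>T\<close> from each cube of the grid \<open>h \<int>\<^sup>N\<close> that meets \<open>T\<close>.\<close>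
lemma finite_grid_net:
  fixes h R :: real
  assumes "h > 0" and "R \<ge> 0" and bounded: "\<forall>t\<in>T. \<forall>i<N. \<bar>t i\<bar> \<le> R"
  obtains F where "finite F" "F \<subseteq> T" "real (card F) \<le> (2 * R / h + 3) ^ N"
    "\<forall>t\<in>T. \<exists>c\<in>F. \<forall>i<N. \<bar>t i - c i\<bar> < h"
proof -
  define K where "K = \<lceil>R / h\<rceil>"
  define cell where "cell = (\<lambda>t::nat \<Rightarrow> real. restrict (\<lambda>i. \<lfloor>t i / h\<rfloor>) {..<N})"
  define F where "F = inv_into T cell ` cell ` T"
  have cells: "cell ` T \<subseteq> PiE {..<N} (\<lambda>_. {-K..K})"
  proof (rule image_subsetI)
    fix t assume "t \<in> T"
    then show "cell t \<in> PiE {..<N} (\<lambda>_. {-K..K})"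
      unfolding cell_def restrict_PiE_iff K_def
      using floor_divide_mem_ceiling_range[OF assms(1)] bounded by blast
  qed
  have fin_cells: "finite (PiE {..<N} (\<lambda>_::nat. {-K..K}))" by (intro finite_PiE) auto
  have "finite F" unfolding F_def using cells fin_cells by (meson finite_imageI finite_subset)
  moreover have "F \<subseteq> T" unfolding F_def by (auto intro: inv_into_into)
  moreover have "card F \<le> card (PiE {..<N} (\<lambda>_::nat. {-K..K}))"
    unfolding F_def using cells fin_cells by (meson card_image_le card_mono finite_subset le_trans)
  then have "real (card F) \<le> (2 * R / h + 3) ^ N"
    using real_card_ceiling_cube_le[OF assms(1,2), of N] unfolding K_def by linarith
  moreover have "\<exists>c\<in>F. \<forall>i<N. \<bar>t i - c i\<bar> < h" if "t \<in> T" for t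
  proof -
    have "inv_into T cell (cell t) \<in> F" "cell (inv_into T cell (cell t)) = cell t"
      using that by (auto simp: F_def f_inv_into_f)
    then show ?thesis
      using abs_diff_less_if_floor_divide_eq[OF assms(1)]
      by (metis (no_types, lifting) cell_def lessThan_iff restrict_apply')
  qed
  ultimately show ?thesis using that by blast
qed

lemma finite_net:
  assumes "\<epsilon> > 0" and "R \<ge> 0" and bounded: "\<forall>t\<in>T. vnorm N t \<le> R"
  obtains F where "finite F" "F \<subseteq> T" "real (card F) \<le> (2 * R * sqrt (real N + 1) / \<epsilon> + 3) ^ N"
    "covers N T F \<epsilon>"
proof -
  define h where "h = \<epsilon> / sqrt (real N + 1)"
  have h: "h > 0" using assms(1) by (simp add: h_def)
  have "\<forall>t\<in>T. \<forall>i<N. \<bar>t i\<bar> \<le> R" using abs_le_vnorm bounded order_trans by blast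
  then obtain F where F: "finite F" "F \<subseteq> T" "real (card F) \<le> (2 * R / h + 3) ^ N"
      and close: "\<forall>t\<in>T. \<exists>c\<in>F. \<forall>i<N. \<bar>t i - c i\<bar> < h"
    by (rule finite_grid_net[OF h assms(2)])
  have "covers N T F \<epsilon>"
  proof
    fix t assume "t \<in> T"
    then obtain c where c: "c \<in> F" "\<forall>i<N. \<bar>t i - c i\<bar> < h" using close by blast
    have "(t i - c i)\<^sup>2 \<le> h\<^sup>2" if "i < N" for i
      using c(2) that h by (metis abs_le_square_iff abs_of_pos less_imp_le)
    then have "(\<Sum>i<N. (t i - c i)\<^sup>2) \<le> (\<Sum>i<N. h\<^sup>2)"
      by (intro sum_mono) simp
    also have "\<dots> = real N / (real N + 1) * \<epsilon>\<^sup>2" by (simp add: h_def power_divide)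
    also have "\<dots> \<le> \<epsilon>\<^sup>2" by (rule mult_left_le_one_le) auto
    finally show "t \<in> (\<Union>c\<in>F. {y. vnorm N (\<lambda>i. y i - c i) \<le> \<epsilon>})"
      using c(1) assms(1) vnorm_le_iff_sum_squares_le[of \<epsilon> N "\<lambda>i. t i - c i"] by auto
  qed
  moreover have "2 * R / h = 2 * R * sqrt (real N + 1) / \<epsilon>" by (simp add: h_def)
  ultimately show ?thesis using F that by simp
qed

lemma covnum_attained:
  assumes "\<epsilon> > 0" and "R \<ge> 0" and "\<forall>t\<in>T. vnorm N t \<le> R"
  obtains F where "finite F" "F \<subseteq> T" "card F = covnum N T \<epsilon>" "covers N T F \<epsilon>"
proof -
  obtain F where "finite F" "F \<subseteq> T" "real (card F) \<le> (2 * R * sqrt (real N + 1) / \<epsilon> + 3) ^ N"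
      "covers N T F \<epsilon>"
    by (rule finite_net[OF assms])
  then have "\<exists>k F. finite F \<and> F \<subseteq> T \<and> card F = k \<and> covers N T F \<epsilon>" by blast
  then have "\<exists>F. finite F \<and> F \<subseteq> T \<and> card F = covnum N T \<epsilon> \<and> covers N T F \<epsilon>"
    unfolding covnum_def by (rule LeastI_ex)
  then show ?thesis using that by auto
qed

lemma covnum_le_card:
  assumes "finite F" and "F \<subseteq> T" and "covers N T F \<epsilon>"
  shows "covnum N T \<epsilon> \<le> card F"
  unfolding covnum_def using assms by (intro Least_le) blast

lemma covnum_antimono:
  assumes "0 < \<epsilon>" and "\<epsilon> \<le> \<epsilon>'" and "R \<ge> 0" and "\<forall>t\<in>T. vnorm N t \<le> R"
  shows "covnum N T \<epsilon>' \<le> covnum N T \<epsilon>"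
proof -
  obtain F where F: "finite F" "F \<subseteq> T" "card F = covnum N T \<epsilon>" "covers N T F \<epsilon>"
    by (rule covnum_attained[OF assms(1,3,4)])
  have "{y. vnorm N (\<lambda>i. y i - c i) \<le> \<epsilon>} \<subseteq> {y. vnorm N (\<lambda>i. y i - c i) \<le> \<epsilon>'}" for c
    using assms(2) by auto
  with F(4) have "covers N T F \<epsilon>'" by blast
  then show ?thesis using covnum_le_card[OF F(1,2)] F(3) by simp
qed

lemma covnum_pos:
  assumes "0 < \<epsilon>" and "R \<ge> 0" and "\<forall>t\<in>T. vnorm N t \<le> R" and "T \<noteq> {}"
  shows "covnum N T \<epsilon> \<ge> 1"
proof -
  obtain F where F: "finite F" "F \<subseteq> T" "card F = covnum N T \<epsilon>" "covers N T F \<epsilon>"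
    by (rule covnum_attained[OF assms(1-3)])
  with assms(4) have "card F > 0" using F(1) by (auto simp: card_gt_0_iff)
  with F(3) show ?thesis by simp
qed

definition entropy :: "nat \<Rightarrow> (nat \<Rightarrow> real) set \<Rightarrow> real \<Rightarrow> real" where
  "entropy N T \<epsilon> = sqrt (ln (real (covnum N T \<epsilon>)))"

lemma entropy_nonneg: "entropy N T \<epsilon> \<ge> 0"
  by (cases "covnum N T \<epsilon> = 0") (simp_all add: entropy_def)

lemma entropy_antimono:
  assumes "0 < \<epsilon>" and "\<epsilon> \<le> \<epsilon>'" and "R \<ge> 0" and "\<forall>t\<in>T. vnorm N t \<le> R" and "T \<noteq> {}"
  shows "entropy N T \<epsilon>' \<le> entropy N T \<epsilon>"
proof -
  have "1 \<le> covnum N T \<epsilon>'" using assms by (intro covnum_pos[of _ R]) auto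
  moreover have "covnum N T \<epsilon>' \<le> covnum N T \<epsilon>" using covnum_antimono[OF assms(1-4)] .
  ultimately show ?thesis by (simp add: entropy_def)
qed

lemma entropy_le_powr:
  assumes "0 < \<epsilon>" and "R \<ge> 0" and "\<forall>t\<in>T. vnorm N t \<le> R" and "T \<noteq> {}"
  shows "entropy N T \<epsilon> \<le> sqrt (real N * 2 * R * sqrt (real N + 1)) * \<epsilon> powr (-1/2) + sqrt (3 * real N)"
proof -
  define Q where "Q = 2 * R * sqrt (real N + 1) / \<epsilon> + 3"
  have Q: "Q \<ge> 3" unfolding Q_def using assms by simp
  obtain F where F: "finite F" "F \<subseteq> T" "real (card F) \<le> Q ^ N" "covers N T F \<epsilon>"
    unfolding Q_def by (rule finite_net[OF assms(1-3)])
  have "1 \<le> real (covnum N T \<epsilon>)" "real (covnum N T \<epsilon>) \<le> Q ^ N"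
    using covnum_pos[OF assms] covnum_le_card[OF F(1,2,4)] F(3) by auto
  then have "ln (real (covnum N T \<epsilon>)) \<le> real N * ln Q"
    using Q by (simp add: ln_realpow[symmetric])
  also have "\<dots> \<le> real N * Q" using ln_le_minus_one[of Q] Q by (intro mult_left_mono) auto
  also have "\<dots> = real N * 2 * R * sqrt (real N + 1) * (1 / \<epsilon>) + 3 * real N"
    unfolding Q_def by (simp add: algebra_simps)
  finally have "entropy N T \<epsilon> \<le> sqrt (real N * 2 * R * sqrt (real N + 1) * (1 / \<epsilon>) + 3 * real N)"
    unfolding entropy_def by simp
  also have "\<dots> \<le> sqrt (real N * 2 * R * sqrt (real N + 1) * (1 / \<epsilon>)) + sqrt (3 * real N)"
    using assms by (intro sqrt_add_le_add_sqrt) auto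
  also have "\<dots> = sqrt (real N * 2 * R * sqrt (real N + 1)) * \<epsilon> powr (-1/2) + sqrt (3 * real N)"
    using assms(1) by (simp add: real_sqrt_mult powr_minus_divide powr_half_sqrt real_sqrt_divide)
  finally show ?thesis .
qed

text \<open>\<open>entropy\<close> is monotone, hence measurable, and dominated by the integrable \<open>A \<epsilon>\<^sup>-\<^sup>1\<^sup>/\<^sup>2 + B\<close>.\<close>
lemma entropy_integrable:
  assumes "\<Lambda> \<ge> 0" and "R \<ge> 0" and "\<forall>t\<in>T. vnorm N t \<le> R" and "T \<noteq> {}"
  shows "entropy N T integrable_on {0..\<Lambda>}"
proof -
  define A where "A = sqrt (real N * 2 * R * sqrt (real N + 1))"
  define B where "B = sqrt (3 * real N)"
  have "(\<lambda>x::real. x powr (-1/2)) integrable_on {0..\<Lambda>}"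
    by (rule integrable_on_powr_from_0) (use assms in auto)
  then have "(\<lambda>x. A * x powr (-1/2) + B) integrable_on {0..\<Lambda>}"
    using integrable_on_cmult_left[of "\<lambda>x::real. x powr (-1/2)" "{0..\<Lambda>}" A]
    by (intro integrable_add) auto
  then have dominant: "(\<lambda>x. A * x powr (-1/2) + B) integrable_on {0<..\<Lambda>}"
    by (rule integrable_spike_set) (auto intro: negligible_subset[of "{0}"])
  have "mono_on {0<..\<Lambda>} (\<lambda>x. - entropy N T x)"
    unfolding mono_on_def using entropy_antimono[OF _ _ assms(2-4)] by auto
  moreover have "space lborel = space lebesgue" "sets borel \<subseteq> sets lebesgue"
    by force+
  ultimately have "(\<lambda>x. - entropy N T x) \<in> borel_measurable (lebesgue_on {0<..\<Lambda>})"
    by (metis borel_measurable_mono_on_fnc borel_measurable_subalgebra mono_restrict_space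
        space_lborel space_restrict_space)
  then have "entropy N T \<in> borel_measurable (lebesgue_on {0<..\<Lambda>})"
    using borel_measurable_uminus by fastforce
  then have "entropy N T integrable_on {0<..\<Lambda>}"
  proof (rule measurable_bounded_by_integrable_imp_integrable[OF _ dominant])
    fix x assume "x \<in> {0<..\<Lambda>}"
    then show "norm (entropy N T x) \<le> A * x powr (-1/2) + B"
      using entropy_le_powr[OF _ assms(2-4), of x] entropy_nonneg[of N T x] by (simp add: A_def B_def)
  qed auto
  then show ?thesis
    by (rule integrable_spike_set) (auto intro: negligible_subset[of "{0}"])
qed

text \<open>Each dyadic term is bounded by the integral over the interval to its left.\<close>
lemma antimono_dyadic_sum_le_integral:
  fixes f :: "real \<Rightarrow> real"
  assumes f: "f integrable_on {0..\<Lambda>}"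
    and antimono: "\<And>x y. 0 < x \<Longrightarrow> x \<le> y \<Longrightarrow> y \<le> \<Lambda> \<Longrightarrow> f y \<le> f x"
    and r: "0 < r" "r \<le> 2 * \<Lambda>"
  shows "(\<Sum>k<K. (r / 2^(k+2)) * f (r / 2^(k+1))) \<le> integral {r / 2^(K+1) .. r / 2} f"
proof (induction K)
  case 0
  show ?case by simp
next
  case (Suc K)
  define a where "a = r / 2^(K+2)"
  define b where "b = r / 2^(K+1)"
  have ab: "0 < a" "a \<le> b" "b \<le> r/2" "r/2 \<le> \<Lambda>"
    using r by (auto simp: a_def b_def divide_le_eq field_simps)
  have "(b - a) * f b = integral {a..b} (\<lambda>x. f b)" using ab by simp
  also have "\<dots> \<le> integral {a..b} f"
    by (intro integral_le integrable_on_subinterval[OF f]) (use ab in \<open>auto intro!: antimono\<close>)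
  finally have step: "r / 2^(K+2) * f (r / 2^(K+1)) \<le> integral {a..b} f"
    by (simp add: a_def b_def field_simps)
  have "integral {b .. r/2} f + integral {a..b} f = integral {a .. r/2} f"
    using Henstock_Kurzweil_Integration.integral_combine[OF ab(2,3) integrable_on_subinterval[OF f]] ab
    by simp
  then show ?case using Suc.IH step by (simp add: a_def b_def)
qed

section \<open>Dudley's inequality by chaining\<close>

lemma le_if_le_add_dyadic:
  fixes x B r c :: real
  assumes "\<And>k. x \<le> B + r / 2 ^ k * c"
  shows "x \<le> B"
proof (rule LIMSEQ_le_const)
  show "(\<lambda>k. B + r / 2 ^ k * c) \<longlonglongrightarrow> B"
    using tendsto_add[OF tendsto_const tendsto_mult_left_zero[OF LIMSEQ_divide_realpow_zero[of 2 r]]]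
    by simp
qed (use assms in blast)

lemma sum_inverse_two_power_Suc: "(\<Sum>k<K. 1 / (2::real) ^ (k+1)) = 1 - 1 / 2 ^ K"
  by (induction K) (auto simp: field_simps)

lemma sum_Suc_divide_two_power_Suc: "(\<Sum>k<K. real (k+1) / (2::real) ^ (k+1)) = 2 - real (K+2) / 2 ^ K"
  by (induction K) (auto simp: field_simps)

lemma exp_minus_le_half_power: "exp (- real m) \<le> (1/2::real) ^ m"
proof -
  have "exp (-1::real) \<le> 1/2"
    using exp_ge_add_one_self[of 1] by (simp add: exp_minus field_simps)
  then have "exp (-1) ^ m \<le> (1/2::real) ^ m" by (intro power_mono) simp_all
  then show ?thesis by (simp add: exp_of_nat_mult[symmetric])
qed

definition dudley_integral :: "nat \<Rightarrow> (nat \<Rightarrow> real) set \<Rightarrow> real \<Rightarrow> real" where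
  "dudley_integral N T \<Lambda> = integral {0..\<Lambda>} (entropy N T)"

lemma dudley_integral_nonneg:
  assumes "T \<noteq> {}" and "\<forall>t\<in>T. vnorm N t \<le> \<Lambda>"
  shows "dudley_integral N T \<Lambda> \<ge> 0"
proof -
  have "0 \<le> \<Lambda>" using assms vnorm_nonneg order_trans by blast
  then have "entropy N T integrable_on {0..\<Lambda>}"
    using assms(2,1) by (rule entropy_integrable[OF _ \<open>0 \<le> \<Lambda>\<close>])
  then show ?thesis
    unfolding dudley_integral_def by (rule integral_nonneg) (simp add: entropy_nonneg)
qed

definition gauss_sup :: "nat \<Rightarrow> (nat \<Rightarrow> real) set \<Rightarrow> (nat \<Rightarrow> real) \<Rightarrow> real" where
  "gauss_sup N T w = (SUP t\<in>T. \<bar>vinner N t w\<bar>)"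

lemma bdd_above_abs_vinner:
  assumes "\<forall>t\<in>T. vnorm N t \<le> R"
  shows "bdd_above ((\<lambda>t. \<bar>vinner N t w\<bar>) ` T)"
proof (rule bdd_aboveI2)
  fix t assume "t \<in> T"
  then show "\<bar>vinner N t w\<bar> \<le> R * vnorm N w"
    using abs_vinner_le[of N t w] assms by (meson mult_right_mono order_trans vnorm_nonneg)
qed

lemma gauss_sup_le_iff:
  assumes "T \<noteq> {}" and "\<forall>t\<in>T. vnorm N t \<le> R"
  shows "gauss_sup N T w \<le> B \<longleftrightarrow> (\<forall>t\<in>T. \<bar>vinner N t w\<bar> \<le> B)"
  unfolding gauss_sup_def by (rule cSUP_le_iff[OF assms(1) bdd_above_abs_vinner[OF assms(2)]])

lemma gauss_sup_nonpos:
  assumes "T \<noteq> {}" and "\<forall>t\<in>T. vnorm N t \<le> 0"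
  shows "gauss_sup N T w \<le> 0"
  unfolding gauss_sup_le_iff[OF assms]
proof
  fix t assume "t \<in> T"
  then have "vnorm N t = 0" using assms(2) vnorm_nonneg[of N t] by auto
  then show "\<bar>vinner N t w\<bar> \<le> 0" using abs_vinner_le[of N t w] by simp
qed

lemma ennreal_le_add_suminf_indicator:
  assumes bound: "\<And>m. w \<notin> B m \<Longrightarrow> x \<le> a + c * real m" and "a \<ge> 0" and "c > 0"
  shows "ennreal x \<le> ennreal a + ennreal c * (\<Sum>m. indicator (B m) w)"
proof (cases "\<forall>m. w \<in> B m")
  case True
  have "\<not> summable (\<lambda>_::nat. 1::real)"
    using summable_LIMSEQ_zero[of "\<lambda>_. 1::real"] by (auto simp: LIMSEQ_const_iff)
  with True have "(\<Sum>m. indicator (B m) w :: ennreal) = \<infinity>"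
    using summable_suminf_not_top[of "\<lambda>_. 1::real"] by auto
  then show ?thesis using \<open>c > 0\<close> by (simp add: ennreal_mult_top)
next
  case False
  define m0 where "m0 = (LEAST m. w \<notin> B m)"
  have "w \<notin> B m0" unfolding m0_def using False by (metis LeastI_ex)
  moreover have "w \<in> B m" if "m < m0" for m
    using that not_less_Least unfolding m0_def by blast
  ultimately have "x \<le> a + c * real m0" "(\<Sum>m<m0. indicator (B m) w :: ennreal) = of_nat m0"
    using bound by auto
  then have "ennreal x \<le> ennreal a + ennreal c * (\<Sum>m<m0. indicator (B m) w)"
    using assms(2,3) by (simp add: ennreal_leI ennreal_plus[symmetric] ennreal_mult[symmetric]
        ennreal_of_nat_eq_real_of_nat del: ennreal_plus)
  also have "\<dots> \<le> ennreal a + ennreal c * (\<Sum>m. indicator (B m) w)"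
    by (intro add_left_mono mult_left_mono sum_le_suminf) (auto intro: summableI)
  finally show ?thesis .
qed

lemma nn_integral_le_of_tail:
  assumes "prob_space M" and sets: "\<And>m. B m \<in> sets M"
    and tail: "\<And>m. emeasure M (B m) \<le> ennreal ((1/2) ^ m)"
    and bound: "\<And>w m. w \<in> space M \<Longrightarrow> w \<notin> B m \<Longrightarrow> X w \<le> a + c * real m"
    and "a \<ge> 0" and "c > 0"
  shows "(\<integral>\<^sup>+w. ennreal (X w) \<partial>M) \<le> ennreal (a + 2 * c)"
proof -
  interpret prob_space M by fact
  have "(\<integral>\<^sup>+w. ennreal (X w) \<partial>M) \<le> (\<integral>\<^sup>+w. ennreal a + ennreal c * (\<Sum>m. indicator (B m) w) \<partial>M)"
    using bound assms(5,6) by (intro nn_integral_mono ennreal_le_add_suminf_indicator) auto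
  also have "\<dots> = ennreal a + ennreal c * (\<Sum>m. emeasure M (B m))"
    using sets by (simp add: nn_integral_add nn_integral_cmult nn_integral_suminf emeasure_space_1)
  also have "(\<Sum>m. emeasure M (B m)) \<le> (\<Sum>m. ennreal ((1/2) ^ m))"
    by (intro suminf_le tail) auto
  also have "(\<Sum>m. ennreal ((1/2::real) ^ m)) = ennreal 2"
    using suminf_geometric[of "1/2::real"] by (subst suminf_ennreal2) auto
  finally have "(\<integral>\<^sup>+w. ennreal (X w) \<partial>M) \<le> ennreal a + ennreal c * ennreal 2"
    by (simp add: add_left_mono mult_left_mono)
  also have "\<dots> = ennreal (a + 2 * c)"
    using assms(5,6) by (simp add: ennreal_plus ennreal_mult mult_ac)
  finally show ?thesis .
qed

locale chaining =
  fixes N :: nat and T :: "(nat \<Rightarrow> real) set" and r \<Lambda> :: real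
  assumes symmetric: "\<And>t. t \<in> T \<Longrightarrow> (\<lambda>i. - t i) \<in> T"
    and radius_pos: "r > 0"
    and radius_le: "r \<le> \<Lambda>"
    and bounded: "\<forall>t\<in>T. vnorm N t \<le> r"
    and not_bounded_half: "\<exists>t\<in>T. vnorm N t > r / 2"
begin

definition eps :: "nat \<Rightarrow> real" where
  "eps k = r / 2 ^ k"

text \<open>The chains start at the origin, which need not lie in \<open>T\<close>.\<close>
definition nets :: "nat \<Rightarrow> (nat \<Rightarrow> real) set" where
  "nets k = (if k = 0 then {\<lambda>i. 0} else
     (SOME F. finite F \<and> F \<subseteq> T \<and> card F = covnum N T (eps k) \<and> covers N T F (eps k)))"

definition proj :: "nat \<Rightarrow> (nat \<Rightarrow> real) \<Rightarrow> (nat \<Rightarrow> real)" where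
  "proj k t = (SOME c. c \<in> nets k \<and> vnorm N (\<lambda>i. t i - c i) \<le> eps k)"

definition links :: "nat \<Rightarrow> (nat \<Rightarrow> real) set" where
  "links k = {v \<in> (\<lambda>(a, b) i. a i - b i) ` (nets (Suc k) \<times> nets k). vnorm N v \<le> 3 * eps (Suc k)}"

text \<open>The summand \<open>k + 1\<close> makes the failure probabilities of the levels sum to \<open>exp (- u\<^sup>2)\<close>.\<close>
definition threshold :: "nat \<Rightarrow> real \<Rightarrow> real" where
  "threshold k u = 3 * eps (Suc k) * sqrt (2 * (2 * ln (real (card (nets (Suc k)))) + (u\<^sup>2 + real (Suc k))))"

definition exceptional :: "real \<Rightarrow> (nat \<Rightarrow> real) set" where
  "exceptional u = (\<Union>k. \<Union>v\<in>links k. {w \<in> space (gauss_vec N). threshold k u < vinner N v w})"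

lemma nonempty: "T \<noteq> {}"
  using not_bounded_half by blast

lemma bounded_by_Lambda: "\<forall>t\<in>T. vnorm N t \<le> \<Lambda>"
  using bounded radius_le by fastforce

lemma eps_pos: "eps k > 0"
  unfolding eps_def using radius_pos by simp

lemma eps_Suc: "eps (Suc k) = eps k / 2"
  unfolding eps_def by simp

lemma nets_Suc:
  "finite (nets (Suc k)) \<and> nets (Suc k) \<subseteq> T \<and> card (nets (Suc k)) = covnum N T (eps (Suc k))
     \<and> covers N T (nets (Suc k)) (eps (Suc k))"
proof -
  obtain F where "finite F" "F \<subseteq> T" "card F = covnum N T (eps (Suc k))" "covers N T F (eps (Suc k))"
    by (rule covnum_attained[OF eps_pos less_imp_le[OF radius_pos] bounded])
  then have "\<exists>F. finite F \<and> F \<subseteq> T \<and> card F = covnum N T (eps (Suc k)) \<and> covers N T F (eps (Suc k))"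
    by blast
  moreover have "nets (Suc k) = (SOME F. finite F \<and> F \<subseteq> T \<and> card F = covnum N T (eps (Suc k))
      \<and> covers N T F (eps (Suc k)))"
    by (simp add: nets_def)
  ultimately show ?thesis by (metis (mono_tags, lifting) someI_ex)
qed

lemma finite_nets: "finite (nets k)"
  using nets_Suc by (cases k) (auto simp: nets_def)

lemma covers_nets: "covers N T (nets k) (eps k)"
  using nets_Suc bounded by (cases k) (auto simp: nets_def eps_def)

lemma card_nets_pos: "card (nets k) \<ge> 1"
  using nets_Suc covnum_pos[OF eps_pos _ bounded nonempty] radius_pos
  by (cases k) (auto simp: nets_def)

lemma card_nets_mono: "card (nets k) \<le> card (nets (Suc k))"
proof (cases k)
  case 0
  then show ?thesis using card_nets_pos[of "Suc k"] by (simp add: nets_def)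
next
  case (Suc j)
  have "covnum N T (eps k) \<le> covnum N T (eps (Suc k))"
    using radius_pos eps_pos[of k] by (intro covnum_antimono[OF eps_pos _ _ bounded]) (auto simp: eps_Suc)
  then show ?thesis using nets_Suc Suc by metis
qed

lemma proj_close:
  assumes "t \<in> T"
  shows "proj k t \<in> nets k \<and> vnorm N (\<lambda>i. t i - proj k t i) \<le> eps k"
proof -
  have "\<exists>c. c \<in> nets k \<and> vnorm N (\<lambda>i. t i - c i) \<le> eps k"
    using covers_nets[of k] assms by blast
  then show ?thesis unfolding proj_def by (rule someI_ex)
qed

lemma proj_0: "t \<in> T \<Longrightarrow> proj 0 t = (\<lambda>i. 0)"
  using proj_close[of t 0] by (simp add: nets_def)

lemma proj_step_in_links:
  assumes "t \<in> T"
  shows "(\<lambda>i. proj (Suc k) t i - proj k t i) \<in> links k"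
proof -
  have "vnorm N (\<lambda>i. proj (Suc k) t i - proj k t i)
      \<le> vnorm N (\<lambda>i. proj (Suc k) t i - t i) + vnorm N (\<lambda>i. t i - proj k t i)"
    by (rule vnorm_triangle_diff)
  also have "\<dots> \<le> eps (Suc k) + eps k"
    using proj_close[OF assms, of k] proj_close[OF assms, of "Suc k"] vnorm_diff_commute[of N "proj (Suc k) t" t]
    by simp
  also have "\<dots> = 3 * eps (Suc k)" by (simp add: eps_def)
  finally show ?thesis
    unfolding links_def using proj_close[OF assms] by (auto intro!: image_eqI[where x = "(proj (Suc k) t, proj k t)"])
qed

lemma finite_links: "finite (links k)"
  unfolding links_def using finite_nets by auto

lemma card_links: "real (card (links k)) \<le> (real (card (nets (Suc k))))\<^sup>2"
proof -
  have "card (links k) \<le> card ((\<lambda>(a, b) i. a i - b i) ` (nets (Suc k) \<times> nets k))"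
    unfolding links_def by (intro card_mono) (auto simp: finite_nets)
  also have "\<dots> \<le> card (nets (Suc k) \<times> nets k)"
    by (rule card_image_le) (simp add: finite_nets)
  also have "\<dots> = card (nets (Suc k)) * card (nets k)"
    by (rule card_cartesian_product)
  also have "\<dots> \<le> card (nets (Suc k)) * card (nets (Suc k))"
    by (intro mult_left_mono card_nets_mono) simp
  finally show ?thesis by (simp add: power2_eq_square) (metis of_nat_le_iff of_nat_mult)
qed

lemma sets_exceptional: "exceptional u \<in> sets (gauss_vec N)"
  unfolding exceptional_def by (rule sets.countable_UN) (auto intro!: sets.finite_UN finite_links)

lemma emeasure_exceptional:
  assumes "u \<ge> 0"
  shows "emeasure (gauss_vec N) (exceptional u) \<le> ennreal (exp (- u\<^sup>2))"
proof -
  have level: "emeasure (gauss_vec N) (\<Union>v\<in>links k. {w \<in> space (gauss_vec N). threshold k u < vinner N v w})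
      \<le> ennreal (exp (- u\<^sup>2) * (1/2) ^ Suc k)" for k
  proof -
    have "emeasure (gauss_vec N) (\<Union>v\<in>links k. {w \<in> space (gauss_vec N). threshold k u < vinner N v w})
        \<le> ennreal (exp (- (u\<^sup>2 + real (Suc k))))"
      unfolding threshold_def
      using card_links[of k] card_nets_pos[of "Suc k"] eps_pos[of "Suc k"] assms
      by (intro gauss_vec_max_tail finite_links) (auto simp: links_def)
    also have "\<dots> \<le> ennreal (exp (- u\<^sup>2) * (1/2) ^ Suc k)"
      using exp_minus_le_half_power[of "Suc k"]
      by (intro ennreal_leI) (simp add: exp_diff exp_minus field_simps del: of_nat_Suc)
    finally show ?thesis .
  qed
  have "emeasure (gauss_vec N) (exceptional u)
      \<le> (\<Sum>k. emeasure (gauss_vec N) (\<Union>v\<in>links k. {w \<in> space (gauss_vec N). threshold k u < vinner N v w}))"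
    unfolding exceptional_def by (intro emeasure_subadditive_countably) (auto intro!: sets.finite_UN finite_links)
  also have "\<dots> \<le> (\<Sum>k. ennreal (exp (- u\<^sup>2) * (1/2) ^ Suc k))"
    by (intro suminf_le level) auto
  also have "\<dots> = ennreal (\<Sum>k. exp (- u\<^sup>2) * (1/2) ^ Suc k)"
    by (intro suminf_ennreal2) (auto intro!: summable_mult)
  also have "(\<Sum>k. exp (- u\<^sup>2) * (1/2::real) ^ Suc k) = exp (- u\<^sup>2)"
    using suminf_mult[of "\<lambda>k. (1/2::real) ^ k" "exp (- u\<^sup>2) / 2"] suminf_geometric[of "1/2::real"]
    by (simp add: mult_ac)
  finally show ?thesis .
qed

text \<open>Two antipodal points at distance \<open>> r\<close> cannot share a ball of radius \<open>r / 2\<close>.\<close>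
lemma card_nets_1: "card (nets 1) \<ge> 2"
proof (rule ccontr)
  assume "\<not> 2 \<le> card (nets 1)"
  with card_nets_pos[of 1] have "card (nets 1) = 1" by simp
  then obtain c where c: "nets 1 = {c}" by (auto simp: card_Suc_eq)
  obtain t where t: "t \<in> T" "vnorm N t > r / 2" using not_bounded_half by blast
  have "vnorm N (\<lambda>i. t i - c i) \<le> r / 2" "vnorm N (\<lambda>i. - t i - c i) \<le> r / 2"
    using covers_nets[of 1] t(1) symmetric[OF t(1)] c by (auto simp: eps_def)
  moreover have "vnorm N (\<lambda>i. t i - (- t i))
      \<le> vnorm N (\<lambda>i. t i - c i) + vnorm N (\<lambda>i. c i - (- t i))"
    by (rule vnorm_triangle_diff)
  moreover have "vnorm N (\<lambda>i. c i - (- t i)) = vnorm N (\<lambda>i. - t i - c i)"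
    by (rule vnorm_diff_commute)
  ultimately have "vnorm N (\<lambda>i. t i - (- t i)) \<le> r" by simp
  moreover have "vnorm N (\<lambda>i. t i - (- t i)) = 2 * vnorm N t"
    using vnorm_scale[of N 2 t] by simp
  ultimately show False using t(2) by simp
qed

lemma entropy_eps_Suc: "entropy N T (eps (Suc k)) = sqrt (ln (real (card (nets (Suc k)))))"
  using nets_Suc[of k] by (simp add: entropy_def)

lemma entropy_integrable_on: "entropy N T integrable_on {0..\<Lambda>}"
  using radius_pos radius_le by (intro entropy_integrable[OF _ _ bounded nonempty]) auto

lemma dyadic_entropy_sum_le:
  "(\<Sum>k<K. (r / 2^(k+2)) * entropy N T (r / 2^(k+1))) \<le> dudley_integral N T \<Lambda>"
proof -
  have "(\<Sum>k<K. (r / 2^(k+2)) * entropy N T (r / 2^(k+1))) \<le> integral {r / 2^(K+1) .. r / 2} (entropy N T)"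
    using radius_pos radius_le
    by (intro antimono_dyadic_sum_le_integral[OF entropy_integrable_on]
        entropy_antimono[OF _ _ _ bounded nonempty]) auto
  also have "\<dots> \<le> dudley_integral N T \<Lambda>"
    unfolding dudley_integral_def
  proof (rule integral_subset_le)
    show "{r / 2 ^ (K + 1)..r / 2} \<subseteq> {0..\<Lambda>}" using radius_pos radius_le by auto
    then show "entropy N T integrable_on {r / 2 ^ (K + 1)..r / 2}"
      by (meson entropy_integrable_on integrable_on_subinterval)
  qed (use entropy_integrable_on entropy_nonneg in auto)
  finally show ?thesis .
qed

text \<open>The first net has at least two points, so the integral is at least \<open>(r / 4) sqrt (ln 2)\<close>.\<close>
lemma radius_le_dudley_integral: "r \<le> 5 * dudley_integral N T \<Lambda>"
proof -
  have "(r / 4) * entropy N T (eps 1) \<le> dudley_integral N T \<Lambda>"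
    using dyadic_entropy_sum_le[of 1] by (simp add: eps_def)
  moreover have "ln 2 \<le> ln (real (card (nets 1)))"
    using card_nets_1 by simp
  then have "2/3 \<le> ln (real (card (nets 1)))"
    using ln2_ge_two_thirds by linarith
  then have "4/5 \<le> entropy N T (eps 1)"
    using entropy_eps_Suc[of 0] real_le_rsqrt[of "4/5"] by (simp add: power2_eq_square)
  then have "(r / 4) * (4/5) \<le> (r / 4) * entropy N T (eps 1)"
    using radius_pos by (intro mult_left_mono) auto
  ultimately show ?thesis by simp
qed

lemma threshold_le:
  assumes "u \<ge> 0"
  shows "threshold k u \<le> 12 * ((r / 2^(k+2)) * entropy N T (r / 2^(k+1)))
      + 3 * sqrt 2 * u * r * (1 / 2^(k+1)) + 6 * r * (real (k+1) / 2^(k+1))"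
proof -
  define n where "n = real (card (nets (Suc k)))"
  have ln_n: "ln n \<ge> 0" using card_nets_pos[of "Suc k"] by (simp add: n_def)
  have "2 * (2 * ln n + (u\<^sup>2 + real (Suc k))) = (4 * ln n + 2 * u\<^sup>2) + 2 * real (Suc k)"
    by simp
  then have "sqrt (2 * (2 * ln n + (u\<^sup>2 + real (Suc k)))) \<le> sqrt (4 * ln n + 2 * u\<^sup>2) + sqrt (2 * real (Suc k))"
    using ln_n by (simp only:) (rule sqrt_add_le_add_sqrt, auto)
  also have "\<dots> \<le> (sqrt (4 * ln n) + sqrt (2 * u\<^sup>2)) + 2 * real (Suc k)"
  proof (intro add_mono sqrt_add_le_add_sqrt)
    have "2 * real (Suc k) \<le> (2 * real (Suc k))\<^sup>2" by (simp add: power2_eq_square)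
    then show "sqrt (2 * real (Suc k)) \<le> 2 * real (Suc k)" by (simp add: real_le_lsqrt)
  qed (use ln_n in auto)
  also have "sqrt (4 * ln n) + sqrt (2 * u\<^sup>2) = 2 * sqrt (ln n) + sqrt 2 * u"
    using assms by (simp add: real_sqrt_mult)
  finally have bound: "sqrt (2 * (2 * ln n + (u\<^sup>2 + real (Suc k))))
      \<le> 2 * sqrt (ln n) + sqrt 2 * u + 2 * real (Suc k)" .
  have "threshold k u = 3 * (r / 2^(Suc k)) * sqrt (2 * (2 * ln n + (u\<^sup>2 + real (Suc k))))"
    unfolding threshold_def n_def eps_def ..
  also have "\<dots> \<le> 3 * (r / 2^(Suc k)) * (2 * sqrt (ln n) + sqrt 2 * u + 2 * real (Suc k))"
    using radius_pos by (intro mult_left_mono bound) auto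
  also have "\<dots> = 12 * ((r / 2^(k+2)) * entropy N T (r / 2^(k+1)))
      + 3 * sqrt 2 * u * r * (1 / 2^(k+1)) + 6 * r * (real (k+1) / 2^(k+1))"
    using entropy_eps_Suc[of k] by (simp add: n_def eps_def field_simps)
  finally show ?thesis .
qed

lemma sum_threshold_le:
  assumes "u \<ge> 0"
  shows "(\<Sum>k<K. threshold k u) \<le> 12 * dudley_integral N T \<Lambda> + 12 * r + 5 * u * r"
proof -
  have "(\<Sum>k<K. threshold k u) \<le> 12 * (\<Sum>k<K. (r / 2^(k+2)) * entropy N T (r / 2^(k+1)))
      + 3 * sqrt 2 * u * r * (\<Sum>k<K. 1 / 2^(k+1)) + 6 * r * (\<Sum>k<K. real (k+1) / 2^(k+1))"
    (is "_ \<le> ?S")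
  proof -
    have "(\<Sum>k<K. threshold k u) \<le> (\<Sum>k<K. 12 * ((r / 2^(k+2)) * entropy N T (r / 2^(k+1)))
        + 3 * sqrt 2 * u * r * (1 / 2^(k+1)) + 6 * r * (real (k+1) / 2^(k+1)))"
      by (intro sum_mono threshold_le assms)
    also have "\<dots> = ?S" by (simp add: sum.distrib sum_distrib_left)
    finally show ?thesis .
  qed
  also have "\<dots> \<le> 12 * dudley_integral N T \<Lambda> + 3 * sqrt 2 * u * r * 1 + 6 * r * 2"
  proof -
    have "(\<Sum>k<K. 1 / (2::real) ^ (k+1)) \<le> 1" "(\<Sum>k<K. real (k+1) / (2::real) ^ (k+1)) \<le> 2"
      unfolding sum_inverse_two_power_Suc sum_Suc_divide_two_power_Suc by simp_all
    then show ?thesis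
      using dyadic_entropy_sum_le[of K] assms radius_pos by (intro add_mono mult_left_mono) auto
  qed
  also have "sqrt 2 \<le> (5/3::real)"
    by (rule real_le_lsqrt) (simp_all add: power2_eq_square)
  then have "3 * sqrt 2 * u * r \<le> 5 * u * r"
    using assms radius_pos by (intro mult_right_mono) auto
  finally show ?thesis by simp
qed

lemma vinner_proj_le:
  assumes "w \<in> space (gauss_vec N)" "w \<notin> exceptional u" and "t \<in> T"
  shows "vinner N (proj K t) w \<le> (\<Sum>k<K. threshold k u)"
proof (induction K)
  case 0
  then show ?case using proj_0[OF assms(3)] by (simp add: vinner_def)
next
  case (Suc K)
  have "vinner N (\<lambda>i. proj (Suc K) t i - proj K t i) w \<le> threshold K u"
    using assms proj_step_in_links[OF assms(3), of K] unfolding exceptional_def by force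
  then show ?case using Suc.IH by (simp add: vinner_diff)
qed

lemma abs_vinner_le_off_exceptional:
  assumes "w \<in> space (gauss_vec N)" "w \<notin> exceptional u" and "t \<in> T" and "u \<ge> 0"
  shows "\<bar>vinner N t w\<bar> \<le> 72 * dudley_integral N T \<Lambda> + 5 * u * r"
proof -
  let ?B = "12 * dudley_integral N T \<Lambda> + 12 * r + 5 * u * r"
  have "vinner N s w \<le> ?B" if "s \<in> T" for s
  proof (rule le_if_le_add_dyadic)
    fix K
    have "vinner N s w = vinner N (proj K s) w + vinner N (\<lambda>i. s i - proj K s i) w"
      by (simp add: vinner_diff)
    also have "vinner N (\<lambda>i. s i - proj K s i) w \<le> vnorm N (\<lambda>i. s i - proj K s i) * vnorm N w"
      by (rule abs_le_D1[OF abs_vinner_le])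
    also have "\<dots> \<le> r / 2 ^ K * vnorm N w"
      using proj_close[OF that, of K] by (intro mult_right_mono vnorm_nonneg) (simp add: eps_def)
    finally show "vinner N s w \<le> ?B + r / 2 ^ K * vnorm N w"
      using vinner_proj_le[OF assms(1,2) that, of K] sum_threshold_le[OF assms(4), of K] by simp
  qed
  from this[OF assms(3)] this[OF symmetric[OF assms(3)]]
  have "\<bar>vinner N t w\<bar> \<le> ?B" by (simp add: vinner_minus)
  also have "\<dots> \<le> 72 * dudley_integral N T \<Lambda> + 5 * u * r"
    using radius_le_dudley_integral by simp
  finally show ?thesis .
qed

text \<open>The nets \<open>nets (Suc k)\<close> form a countable dense subset of \<open>T\<close>.\<close>
lemma sets_forall_abs_vinner_le:
  "{w \<in> space (gauss_vec N). \<forall>t\<in>T. \<bar>vinner N t w\<bar> \<le> B} \<in> sets (gauss_vec N)"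
proof -
  have "{w \<in> space (gauss_vec N). \<forall>t\<in>T. \<bar>vinner N t w\<bar> \<le> B}
      = {w \<in> space (gauss_vec N). \<forall>k. \<forall>c\<in>nets (Suc k). \<bar>vinner N c w\<bar> \<le> B}"
  proof (intro Collect_cong conj_cong refl iffI)
    fix w assume "\<forall>t\<in>T. \<bar>vinner N t w\<bar> \<le> B"
    then show "\<forall>k. \<forall>c\<in>nets (Suc k). \<bar>vinner N c w\<bar> \<le> B" using nets_Suc by blast
  next
    fix w assume nets_le: "\<forall>k. \<forall>c\<in>nets (Suc k). \<bar>vinner N c w\<bar> \<le> B"
    show "\<forall>t\<in>T. \<bar>vinner N t w\<bar> \<le> B"
    proof
      fix t assume "t \<in> T"
      show "\<bar>vinner N t w\<bar> \<le> B"
      proof (rule le_if_le_add_dyadic)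
        fix k
        let ?c = "proj (Suc k) t"
        have "\<bar>vinner N t w\<bar> \<le> \<bar>vinner N ?c w\<bar> + \<bar>vinner N (\<lambda>i. t i - ?c i) w\<bar>"
          using vinner_diff[of N t ?c w] by linarith
        also have "\<dots> \<le> B + vnorm N (\<lambda>i. t i - ?c i) * vnorm N w"
          using nets_le proj_close[OF \<open>t \<in> T\<close>, of "Suc k"] by (intro add_mono abs_vinner_le) auto
        also have "\<dots> \<le> B + eps (Suc k) * vnorm N w"
          using proj_close[OF \<open>t \<in> T\<close>, of "Suc k"] by (intro add_left_mono mult_right_mono vnorm_nonneg) auto
        also have "\<dots> \<le> B + r / 2 ^ k * vnorm N w"
          using radius_pos vnorm_nonneg[of N w] by (simp add: eps_def mult_right_mono field_simps)
        finally show "\<bar>vinner N t w\<bar> \<le> B + r / 2 ^ k * vnorm N w" .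
      qed
    qed
  qed
  also have "\<dots> \<in> sets (gauss_vec N)"
    using finite_nets by (intro sets.sets_Collect_countable_All sets.sets_Collect_finite_All) auto
  finally show ?thesis .
qed

lemma sets_gauss_sup_le: "{w \<in> space (gauss_vec N). gauss_sup N T w \<le> B} \<in> sets (gauss_vec N)"
  using sets_forall_abs_vinner_le[of B] gauss_sup_le_iff[OF nonempty bounded] by simp

lemma gauss_sup_le_off_exceptional:
  assumes "w \<in> space (gauss_vec N)" "w \<notin> exceptional u" and "u \<ge> 0"
  shows "gauss_sup N T w \<le> 72 * dudley_integral N T \<Lambda> + 5 * u * r"
  using abs_vinner_le_off_exceptional[OF assms(1,2) _ assms(3)] gauss_sup_le_iff[OF nonempty bounded] by blast

lemma prob_gauss_sup_le:
  assumes "u \<ge> 0"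
  shows "measure (gauss_vec N) {w \<in> space (gauss_vec N). gauss_sup N T w \<le> 125 * (dudley_integral N T \<Lambda> + u * \<Lambda>)}
    \<ge> 1 - exp (- u\<^sup>2)"
proof -
  interpret prob_space "gauss_vec N" by (rule prob_space_gauss_vec)
  let ?G = "{w \<in> space (gauss_vec N). gauss_sup N T w \<le> 125 * (dudley_integral N T \<Lambda> + u * \<Lambda>)}"
  have "u * r \<le> u * \<Lambda>" "0 \<le> u * \<Lambda>"
    using radius_le radius_pos assms by (auto intro: mult_left_mono)
  then have "72 * dudley_integral N T \<Lambda> + 5 * u * r \<le> 125 * (dudley_integral N T \<Lambda> + u * \<Lambda>)"
    using dudley_integral_nonneg[OF nonempty bounded_by_Lambda] unfolding distrib_left mult.assoc by linarith
  then have "space (gauss_vec N) - exceptional u \<subseteq> ?G"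
    using gauss_sup_le_off_exceptional[OF _ _ assms] by force
  then have "measure (gauss_vec N) (space (gauss_vec N) - exceptional u) \<le> measure (gauss_vec N) ?G"
    by (rule finite_measure_mono[OF _ sets_gauss_sup_le])
  moreover have "measure (gauss_vec N) (space (gauss_vec N) - exceptional u) = 1 - measure (gauss_vec N) (exceptional u)"
    by (rule prob_compl[OF sets_exceptional])
  moreover have "measure (gauss_vec N) (exceptional u) \<le> exp (- u\<^sup>2)"
    using emeasure_exceptional[OF assms] by (simp add: emeasure_eq_measure)
  ultimately show ?thesis by simp
qed

lemma nn_integral_gauss_sup_le:
  "(\<integral>\<^sup>+w. ennreal (gauss_sup N T w) \<partial>gauss_vec N) \<le> ennreal (125 * dudley_integral N T \<Lambda>)"
proof -
  have "(\<integral>\<^sup>+w. ennreal (gauss_sup N T w) \<partial>gauss_vec N)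
      \<le> ennreal (72 * dudley_integral N T \<Lambda> + 2 * (5 * r))"
  proof (rule nn_integral_le_of_tail[OF prob_space_gauss_vec sets_exceptional])
    fix m :: nat
    have "real m \<le> (real m)\<^sup>2"
      using le_square[of m] by (metis of_nat_le_iff of_nat_mult power2_eq_square)
    then have "exp (- (real m)\<^sup>2) \<le> exp (- real m)" by simp
    then show "emeasure (gauss_vec N) (exceptional (real m)) \<le> ennreal ((1/2) ^ m)"
      using emeasure_exceptional[of "real m"] exp_minus_le_half_power[of m]
      by (meson ennreal_leI of_nat_0_le_iff order_trans)
  next
    fix w m assume "w \<in> space (gauss_vec N)" "w \<notin> exceptional (real m)"
    then show "gauss_sup N T w \<le> 72 * dudley_integral N T \<Lambda> + 5 * r * real m"
      using gauss_sup_le_off_exceptional[of w "real m"] by (simp add: mult_ac)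
  qed (use dudley_integral_nonneg[OF nonempty bounded_by_Lambda] radius_pos in auto)
  also have "\<dots> \<le> ennreal (125 * dudley_integral N T \<Lambda>)"
    using radius_le_dudley_integral dudley_integral_nonneg[OF nonempty bounded_by_Lambda] by (intro ennreal_leI) simp
  finally show ?thesis .
qed

end

theorem dudley_inequality:
  assumes "T \<noteq> {}" and "\<And>t. t \<in> T \<Longrightarrow> (\<lambda>i. - t i) \<in> T" and "\<forall>t\<in>T. vnorm N t \<le> \<Lambda>"
    and "u \<ge> 0"
  shows "measure (gauss_vec N) {w \<in> space (gauss_vec N). gauss_sup N T w \<le> 125 * (dudley_integral N T \<Lambda> + u * \<Lambda>)}
      \<ge> 1 - exp (- u\<^sup>2)
    \<and> (\<integral>\<^sup>+w. ennreal (gauss_sup N T w) \<partial>gauss_vec N) \<le> ennreal (125 * dudley_integral N T \<Lambda>)"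
proof -
  define r where "r = (SUP t\<in>T. vnorm N t)"
  have bdd: "bdd_above (vnorm N ` T)" using assms(3) by (auto intro: bdd_aboveI2)
  have radius: "\<forall>t\<in>T. vnorm N t \<le> r" unfolding r_def using bdd by (auto intro: cSUP_upper)
  have "r \<le> \<Lambda>" unfolding r_def using assms(1,3) by (intro cSUP_least) auto
  have "0 \<le> r" using radius assms(1) vnorm_nonneg order_trans by blast
  show ?thesis
  proof (cases "r = 0")
    case True
    then have sup_nonpos: "gauss_sup N T w \<le> 0" for w
      using gauss_sup_nonpos[OF assms(1)] radius by simp
    have "0 \<le> 125 * (dudley_integral N T \<Lambda> + u * \<Lambda>)"
      using dudley_integral_nonneg[OF assms(1,3)] \<open>0 \<le> r\<close> \<open>r \<le> \<Lambda>\<close> assms(4) by simp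
    then have "{w \<in> space (gauss_vec N). gauss_sup N T w \<le> 125 * (dudley_integral N T \<Lambda> + u * \<Lambda>)}
        = space (gauss_vec N)"
      using sup_nonpos by (auto intro: order_trans)
    moreover have "ennreal (gauss_sup N T w) = 0" for w
      using sup_nonpos by (simp add: ennreal_eq_0_iff)
    ultimately show ?thesis
      using dudley_integral_nonneg[OF assms(1,3)] prob_space.prob_space[OF prob_space_gauss_vec] by simp
  next
    case False
    have "\<exists>t\<in>T. vnorm N t > r / 2"
      using False \<open>0 \<le> r\<close> less_cSUP_iff[OF assms(1) bdd, of "r / 2"] unfolding r_def by simp
    then interpret chaining N T r \<Lambda>
      using assms(2) False \<open>0 \<le> r\<close> \<open>r \<le> \<Lambda>\<close> radius by unfold_locales auto
    show ?thesis using prob_gauss_sup_le[OF assms(4)] nn_integral_gauss_sup_le by simp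
  qed
qed

section \<open>ReLU networks\<close>

definition net_range :: "nat \<Rightarrow> nat \<Rightarrow> (nat \<Rightarrow> nat \<Rightarrow> nat \<Rightarrow> real) \<Rightarrow> (nat \<Rightarrow> nat \<Rightarrow> real) \<Rightarrow> nat
    \<Rightarrow> (nat \<Rightarrow> real) set" where
  "net_range d N W b L = {mv N d (netmat d N W b x L) z | x z. x \<in> Rn d \<and> z \<in> unit_cball d}"

lemma net_range_eq_UN:
  "net_range d N W b L = (\<Union>x\<in>Rn d. mv N d (netmat d N W b x L) ` unit_cball d)"
  unfolding net_range_def by blast

lemma net_range_nonempty: "net_range d N W b L \<noteq> {}"
  using zero_in_unit_cball[of d] unfolding net_range_eq_UN by (auto simp: Rn_def)

lemma net_range_symmetric:
  assumes "t \<in> net_range d N W b L"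
  shows "(\<lambda>i. - t i) \<in> net_range d N W b L"
proof -
  obtain x z where "x \<in> Rn d" "z \<in> unit_cball d" "t = mv N d (netmat d N W b x L) z"
    using assms unfolding net_range_def by blast
  moreover have "(\<lambda>i. - z i) \<in> unit_cball d"
    using \<open>z \<in> unit_cball d\<close> by (auto simp: unit_cball_def Rn_def vnorm_minus)
  moreover have "(\<lambda>i. - t i) = mv N d (netmat d N W b x L) (\<lambda>i. - z i)"
    using \<open>t = _\<close> by (simp add: mv_minus)
  ultimately show ?thesis unfolding net_range_def by blast
qed

lemma net_range_bounded:
  assumes "1 \<le> L"
  shows "\<forall>t\<in>net_range d N W b L. vnorm N t \<le> (\<Prod>l<L. opnorm N (indim d N l) (W l))"
proof
  fix t assume "t \<in> net_range d N W b L"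
  then obtain x z where z: "z \<in> unit_cball d" and t: "t = mv N d (netmat d N W b x L) z"
    unfolding net_range_def by blast
  have "vnorm N t \<le> (\<Prod>l<L. opnorm N (indim d N l) (W l)) * vnorm d z"
    unfolding t by (rule vnorm_netmat_le[OF assms])
  also have "\<dots> \<le> (\<Prod>l<L. opnorm N (indim d N l) (W l))"
    using z by (intro mult_left_le prod_nonneg opnorm_nonneg) (auto simp: unit_cball_def vnorm_nonneg)
  finally show "vnorm N t \<le> (\<Prod>l<L. opnorm N (indim d N l) (W l))" .
qed

lemma vnorm_row_mv:
  "vnorm 1 (mv 1 d (mm 1 N d (\<lambda>i j. if i = 0 then w j else 0) A) z) = \<bar>vinner N (mv N d A z) w\<bar>"
proof -
  have "mv 1 d (mm 1 N d (\<lambda>i j. if i = 0 then w j else 0) A) z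
      = mv 1 N (\<lambda>i j. if i = 0 then w j else 0) (mv N d A z)"
    by (simp add: mv_mm)
  then have "mv 1 d (mm 1 N d (\<lambda>i j. if i = 0 then w j else 0) A) z 0 = vinner N (mv N d A z) w"
    by (simp add: mv_def vinner_def mult.commute)
  then show ?thesis by (simp add: vnorm_def)
qed

lemma sup_opnorm_row_eq_gauss_sup:
  assumes "1 \<le> L"
  shows "(SUP x\<in>Rn d. opnorm 1 d (mm 1 N d (\<lambda>i j. if i = 0 then w j else 0) (netmat d N W b x L)))
    = gauss_sup N (net_range d N W b L) w"
proof -
  let ?f = "\<lambda>t. \<bar>vinner N t w\<bar>"
  have "bdd_above (?f ` net_range d N W b L)"
    by (rule bdd_above_abs_vinner[OF net_range_bounded[OF assms]])
  then have "gauss_sup N (net_range d N W b L) w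
      = (SUP x\<in>Rn d. SUP t\<in>mv N d (netmat d N W b x L) ` unit_cball d. ?f t)"
    unfolding gauss_sup_def net_range_eq_UN
    using zero_in_unit_cball[of d] by (intro cSUP_UNION) (auto simp: Rn_def image_UN)
  also have "\<dots> = (SUP x\<in>Rn d. opnorm 1 d (mm 1 N d (\<lambda>i j. if i = 0 then w j else 0) (netmat d N W b x L)))"
    unfolding opnorm_def vnorm_row_mv by (simp add: image_image)
  finally show ?thesis ..
qed

theorem proposition5p1:
  shows "\<exists>C::real. C > 0 \<and>
    (\<forall>(d::nat) (N::nat) (L::nat) (W::nat \<Rightarrow> nat \<Rightarrow> nat \<Rightarrow> real) (b::nat \<Rightarrow> nat \<Rightarrow> real) (u::real).
      1 \<le> L \<longrightarrow> 0 \<le> u \<longrightarrow>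
      (let \<Lambda> = (\<Prod>l<L. opnorm N (indim d N l) (W l));
           Lset = {mv N d (netmat d N W b x L) z | x z. x \<in> Rn d \<and> z \<in> unit_cball d};
           J = integral {0..\<Lambda>} (\<lambda>\<epsilon>. sqrt (ln (real (covnum N Lset \<epsilon>))));
           S = (\<lambda>w::nat \<Rightarrow> real. SUP x\<in>Rn d.
                  opnorm 1 d (mm 1 N d (\<lambda>i j. if i = 0 then w j else 0) (netmat d N W b x L)))
       in measure (gauss_vec N) {w \<in> space (gauss_vec N). S w \<le> C * (J + u * \<Lambda>)}
            \<ge> 1 - 2 * exp (- (u\<^sup>2))
        \<and> (\<integral>\<^sup>+ w. ennreal (S w) \<partial>gauss_vec N) \<le> ennreal (C * J)))"
proof (intro exI[of _ "125::real"] conjI allI impI)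
  fix d N L :: nat and W :: "nat \<Rightarrow> nat \<Rightarrow> nat \<Rightarrow> real" and b :: "nat \<Rightarrow> nat \<Rightarrow> real" and u :: real
  assume L: "1 \<le> L" and u: "0 \<le> u"
  let ?\<Lambda> = "\<Prod>l<L. opnorm N (indim d N l) (W l)"
  have J: "integral {0..?\<Lambda>} (\<lambda>\<epsilon>. sqrt (ln (real (covnum N (net_range d N W b L) \<epsilon>))))
      = dudley_integral N (net_range d N W b L) ?\<Lambda>"
    by (simp add: dudley_integral_def entropy_def[abs_def])
  have "1 - 2 * exp (- u\<^sup>2) \<le> 1 - exp (- u\<^sup>2)" by simp
  then show "let \<Lambda> = ?\<Lambda>;
           Lset = {mv N d (netmat d N W b x L) z | x z. x \<in> Rn d \<and> z \<in> unit_cball d};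
           J = integral {0..\<Lambda>} (\<lambda>\<epsilon>. sqrt (ln (real (covnum N Lset \<epsilon>))));
           S = (\<lambda>w::nat \<Rightarrow> real. SUP x\<in>Rn d.
                  opnorm 1 d (mm 1 N d (\<lambda>i j. if i = 0 then w j else 0) (netmat d N W b x L)))
       in measure (gauss_vec N) {w \<in> space (gauss_vec N). S w \<le> 125 * (J + u * \<Lambda>)}
            \<ge> 1 - 2 * exp (- (u\<^sup>2))
        \<and> (\<integral>\<^sup>+ w. ennreal (S w) \<partial>gauss_vec N) \<le> ennreal (125 * J)"
    using dudley_inequality[where T = "net_range d N W b L" and N = N and \<Lambda> = ?\<Lambda> and u = u,
        OF net_range_nonempty net_range_symmetric net_range_bounded[OF L] u]
    unfolding Let_def sup_opnorm_row_eq_gauss_sup[OF L] net_range_def[symmetric] J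
    by linarith
qed simp

end
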